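(* Let $F\colon\mathbb{R}^m\to\mathscr{P}(\mathbb{R}^n)$ be a multifunction definable in a polynomially bounded o-minimal structure, with closed graph $\Gamma_F$. Then for any $a\in\mathrm{dom}\,F$ and $y\in F(a)$ there exist a neighbourhood $U$ of $(a,y)$ and constants $C,\ell>0$ such that $$\|v-y\|\geq C\,d\big(x,(\Gamma_F)_y\big)^\ell,\qquad (x,v)\in\Gamma_F\cap U,$$ where $(\Gamma_F)_y=\{x\in\mathbb{R}^m\mid y\in F(x)\}$.
   Context: Definable multifunction: a definable set $\Gamma_F\subset\mathbb{R}^m\times\mathbb{R}^n$ with $F(x)=\{y\mid (x,y)\in\Gamma_F\}$, $\mathrm{dom}\,F=\{x\mid F(x)\neq\varnothing\}$. An o-minimal structure is polynomially bounded if every definable function $\mathbb{R}\to\mathbb{R}$ is bounded at $+\infty$ by some power $x^N$. *)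

theory Defs
  imports "HOL-Analysis.Analysis"
begin

text \<open>A structure on the real field: a family S n of subsets of R^n, where R^n is
  represented by real lists of length n (van den Dries' axioms).\<close>
definition structure_on_R :: "(nat \<Rightarrow> real list set set) \<Rightarrow> bool" where
  "structure_on_R S \<longleftrightarrow>
     (\<forall>n. \<forall>A\<in>S n. A \<subseteq> {xs. length xs = n}) \<and>
     (\<forall>n. {} \<in> S n) \<and>
     (\<forall>n A B. A \<in> S n \<longrightarrow> B \<in> S n \<longrightarrow> A \<union> B \<in> S n) \<and>
     (\<forall>n A. A \<in> S n \<longrightarrow> {xs. length xs = n} - A \<in> S n) \<and>
     (\<forall>n A. A \<in> S n \<longrightarrow> {xs @ [r] | xs r. xs \<in> A} \<in> S (Suc n)) \<and>
     (\<forall>n A. A \<in> S n \<longrightarrow> {r # xs | xs r. xs \<in> A} \<in> S (Suc n)) \<and>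
     (\<forall>n i j. i < n \<longrightarrow> j < n \<longrightarrow> {xs. length xs = n \<and> xs ! i = xs ! j} \<in> S n) \<and>
     (\<forall>n A. A \<in> S (Suc n) \<longrightarrow> butlast ` A \<in> S n) \<and>
     {[x, y] | x y. x < y} \<in> S 2 \<and>
     (\<forall>r. {[r]} \<in> S 1) \<and>
     {[x, y, x + y] | x y. True} \<in> S 3 \<and>
     {[x, y, x * y] | x y. True} \<in> S 3"

definition o_minimal :: "(nat \<Rightarrow> real list set set) \<Rightarrow> bool" where
  "o_minimal S \<longleftrightarrow> structure_on_R S \<and>
     (\<forall>A\<in>S 1. \<exists>P :: (ereal \<times> ereal) set. \<exists>F :: real set. finite P \<and> finite F \<and>
        A = {[x] | x. (\<exists>(a, b)\<in>P. a < ereal x \<and> ereal x < b) \<or> x \<in> F})"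

definition polynomially_bounded :: "(nat \<Rightarrow> real list set set) \<Rightarrow> bool" where
  "polynomially_bounded S \<longleftrightarrow> o_minimal S \<and>
     (\<forall>f :: real \<Rightarrow> real. {[x, f x] | x. True} \<in> S 2 \<longrightarrow>
        (\<exists>N :: nat. \<exists>x0. \<forall>x > x0. \<bar>f x\<bar> \<le> x ^ N))"

definition coords :: "real ^ ('m::{finite,linorder}) \<Rightarrow> real list" where
  "coords x = map (\<lambda>i. x $ i) (sorted_list_of_set (UNIV :: 'm set))"

definition definable_graph ::
  "(nat \<Rightarrow> real list set set) \<Rightarrow> ((real ^ ('m::{finite,linorder})) \<times> (real ^ ('n::{finite,linorder}))) set \<Rightarrow> bool" where
  "definable_graph S G \<longleftrightarrow> {coords x @ coords y | x y. (x, y) \<in> G} \<in> S (CARD('m) + CARD('n))"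

end

theory Submission
  imports Defs
begin

(*
  For t > 0 let \<Phi>(t) be the infimum of |v - y| over the points (x, v) of the graph with
  |x - a| \<le> 1, |v - y| \<le> 1 and d(x, \<Gamma>_y) \<ge> t. These points form a compact set on which
  v \<noteq> y, so \<Phi>(t) > 0 whenever the set is nonempty, and \<Phi> decreases in t. The graph of \<Phi>
  is cut out by a first-order formula over the structure, hence definable, and so is
  u \<mapsto> 1/\<Phi>(1/u); polynomial boundedness at +\<infinity> turns into \<Phi>(t) \<ge> t^N for small t.
  For (x, v) near (a, y) with \<delta> = d(x, \<Gamma>_y), the value |v - y| is one of those defining
  \<Phi>(\<delta>), so |v - y| \<ge> \<delta>^N for small \<delta> and |v - y| \<ge> \<Phi>(T) otherwise, which gives
  |v - y| \<ge> C \<delta>^(N+1).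
*)

section \<open>Definable sets\<close>

lemma last_conv_nth_length: "length xs = Suc n \<Longrightarrow> last xs = xs ! n"
  by (cases xs rule: rev_cases) auto

lemma map_nth_upt: "n \<le> length xs \<Longrightarrow> map ((!) xs) [0..<n] = take n xs"
  by (rule nth_equalityI) auto

definition definable :: "(nat \<Rightarrow> real list set set) \<Rightarrow> nat \<Rightarrow> (real list \<Rightarrow> bool) \<Rightarrow> bool" where
  "definable S n P \<longleftrightarrow> {xs. length xs = n \<and> P xs} \<in> S n"

definition definable_function :: "(nat \<Rightarrow> real list set set) \<Rightarrow> nat \<Rightarrow> (real list \<Rightarrow> real) \<Rightarrow> bool" where
  "definable_function S n f \<longleftrightarrow> definable S (Suc n) (\<lambda>xs. last xs = f (butlast xs))"

lemma definable_cong: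
  assumes "definable S n P" and "\<And>xs. length xs = n \<Longrightarrow> P xs \<longleftrightarrow> Q xs"
  shows "definable S n Q"
proof -
  have "{xs. length xs = n \<and> P xs} = {xs. length xs = n \<and> Q xs}" using assms(2) by blast
  with assms(1) show ?thesis unfolding definable_def by simp
qed

lemma pair_set_in_S_if_definable:
  assumes "definable S 2 (\<lambda>xs. P (xs ! 0) (xs ! 1))"
  shows "{[u, w] | u w. P u w} \<in> S 2"
proof -
  have "{xs. length xs = 2 \<and> P (xs ! 0) (xs ! 1)} = {[u, w] | u w. P u w}"
    by (auto simp: numeral_2_eq_2 length_Suc_conv)
  with assms show ?thesis unfolding definable_def by simp
qed

locale real_structure =
  fixes S :: "nat \<Rightarrow> real list set set"
  assumes sets_length: "\<And>n A. A \<in> S n \<Longrightarrow> A \<subseteq> {xs. length xs = n}"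
    and empty_set: "\<And>n. {} \<in> S n"
    and union_set: "\<And>n A B. A \<in> S n \<Longrightarrow> B \<in> S n \<Longrightarrow> A \<union> B \<in> S n"
    and complement_set: "\<And>n A. A \<in> S n \<Longrightarrow> {xs. length xs = n} - A \<in> S n"
    and snoc_set: "\<And>n A. A \<in> S n \<Longrightarrow> {xs @ [r] | xs r. xs \<in> A} \<in> S (Suc n)"
    and cons_set: "\<And>n A. A \<in> S n \<Longrightarrow> {r # xs | xs r. xs \<in> A} \<in> S (Suc n)"
    and diagonal_set: "\<And>n i j. i < n \<Longrightarrow> j < n \<Longrightarrow> {xs. length xs = n \<and> xs ! i = xs ! j} \<in> S n"
    and butlast_image_set: "\<And>n A. A \<in> S (Suc n) \<Longrightarrow> butlast ` A \<in> S n"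
    and less_set: "{[x, y] | x y. x < y} \<in> S 2"
    and singleton_set: "\<And>r. {[r]} \<in> S 1"
    and add_graph_set: "{[x, y, x + y] | x y. True} \<in> S 3"
    and mult_graph_set: "{[x, y, x * y] | x y. True} \<in> S 3"

lemma real_structure_if_structure_on_R: "structure_on_R S \<Longrightarrow> real_structure S"
  unfolding structure_on_R_def real_structure_def Ball_def by (elim conjE) (intro conjI; assumption)

context real_structure
begin

lemma definable_set:
  assumes "A \<in> S n"
  shows "definable S n (\<lambda>xs. xs \<in> A)"
proof -
  have "A \<subseteq> {xs. length xs = n}" using assms sets_length by blast
  then have "{xs. length xs = n \<and> xs \<in> A} = A" by blast
  with assms show ?thesis unfolding definable_def by simp
qed

lemma definable_True: "definable S n (\<lambda>_. True)"
proof -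
  have "{xs. length xs = n} - {} \<in> S n" using complement_set empty_set by blast
  then show ?thesis unfolding definable_def by simp
qed

lemma definable_Not:
  assumes "definable S n P"
  shows "definable S n (\<lambda>xs. \<not> P xs)"
proof -
  have "{xs. length xs = n} - {xs. length xs = n \<and> P xs} \<in> S n"
    using complement_set assms unfolding definable_def .
  moreover have "{xs. length xs = n} - {xs. length xs = n \<and> P xs} = {xs. length xs = n \<and> \<not> P xs}"
    by blast
  ultimately show ?thesis unfolding definable_def by simp
qed

lemma definable_disj:
  assumes "definable S n P" and "definable S n Q"
  shows "definable S n (\<lambda>xs. P xs \<or> Q xs)"
proof -
  have "{xs. length xs = n \<and> P xs} \<union> {xs. length xs = n \<and> Q xs} \<in> S n"
    using union_set assms unfolding definable_def .
  moreover have "{xs. length xs = n \<and> P xs} \<union> {xs. length xs = n \<and> Q xs} = {xs. length xs = n \<and> (P xs \<or> Q xs)}"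
    by blast
  ultimately show ?thesis unfolding definable_def by simp
qed

lemma definable_conj:
  assumes "definable S n P" and "definable S n Q"
  shows "definable S n (\<lambda>xs. P xs \<and> Q xs)"
  using definable_Not[OF definable_disj[OF definable_Not[OF assms(1)] definable_Not[OF assms(2)]]]
  by simp

lemma definable_all_less:
  fixes k :: nat
  assumes "\<And>j. j < k \<Longrightarrow> definable S n (P j)"
  shows "definable S n (\<lambda>xs. \<forall>j<k. P j xs)"
  using assms
proof (induction k)
  case 0
  show ?case using definable_True by simp
next
  case (Suc k)
  then have "definable S n (\<lambda>xs. (\<forall>j<k. P j xs) \<and> P k xs)" by (intro definable_conj) auto
  then show ?case by (rule definable_cong) (auto simp: less_Suc_eq)
qed

lemma definable_ex_last:
  assumes "definable S (Suc n) P"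
  shows "definable S n (\<lambda>xs. \<exists>r. P (xs @ [r]))"
proof -
  have "butlast ` {xs. length xs = Suc n \<and> P xs} \<in> S n"
    using butlast_image_set assms unfolding definable_def .
  moreover have "butlast ` {xs. length xs = Suc n \<and> P xs} = {xs. length xs = n \<and> (\<exists>r. P (xs @ [r]))}"
  proof (intro equalityI subsetI)
    fix xs assume "xs \<in> butlast ` {xs. length xs = Suc n \<and> P xs}"
    then obtain zs where zs: "length zs = Suc n" "P zs" and xs: "xs = butlast zs" by blast
    then obtain r where "zs = xs @ [r]" by (cases zs rule: rev_cases) auto
    with zs show "xs \<in> {xs. length xs = n \<and> (\<exists>r. P (xs @ [r]))}" by auto
  next
    fix xs assume "xs \<in> {xs. length xs = n \<and> (\<exists>r. P (xs @ [r]))}"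
    then obtain r where "length xs = n" "P (xs @ [r])" by blast
    then show "xs \<in> butlast ` {xs. length xs = Suc n \<and> P xs}"
      by (intro image_eqI[where x = "xs @ [r]"]) auto
  qed
  ultimately show ?thesis unfolding definable_def by simp
qed

lemma definable_ex_block:
  assumes "definable S (n + k) P"
  shows "definable S n (\<lambda>xs. \<exists>zs. length zs = k \<and> P (xs @ zs))"
  using assms
proof (induction k arbitrary: P)
  case 0
  then show ?case by simp
next
  case (Suc k)
  have "definable S n (\<lambda>xs. \<exists>zs. length zs = k \<and> (\<exists>r. P ((xs @ zs) @ [r])))"
    using Suc by (intro Suc.IH definable_ex_last) simp
  then show ?case
  proof (rule definable_cong)
    fix xs :: "real list"
    show "(\<exists>zs. length zs = k \<and> (\<exists>r. P ((xs @ zs) @ [r]))) \<longleftrightarrow> (\<exists>zs. length zs = Suc k \<and> P (xs @ zs))"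
      by (metis append_assoc length_Suc_conv_rev)
  qed
qed

lemma definable_tl:
  assumes "definable S n P"
  shows "definable S (Suc n) (\<lambda>xs. P (tl xs))"
proof -
  have "{r # xs | xs r. xs \<in> {xs. length xs = n \<and> P xs}} \<in> S (Suc n)"
    using cons_set assms unfolding definable_def .
  moreover have "{r # xs | xs r. xs \<in> {xs. length xs = n \<and> P xs}} = {xs. length xs = Suc n \<and> P (tl xs)}"
    by (auto simp: length_Suc_conv)
  ultimately show ?thesis unfolding definable_def by simp
qed

lemma definable_drop:
  assumes "definable S n P"
  shows "definable S (k + n) (\<lambda>xs. P (drop k xs))"
proof (induction k)
  case 0
  then show ?case using assms by simp
next
  case (Suc k)
  then have "definable S (Suc (k + n)) (\<lambda>xs. P (drop k (tl xs)))" by (rule definable_tl)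
  then show ?case by (simp add: drop_Suc)
qed

lemma definable_nth_eq:
  assumes "i < n" and "j < n"
  shows "definable S n (\<lambda>xs. xs ! i = xs ! j)"
  using diagonal_set assms unfolding definable_def .

lemma definable_reindex:
  assumes "definable S k P" and "length idx = k" and "set idx \<subseteq> {..<m}"
  shows "definable S m (\<lambda>xs. P (map ((!) xs) idx))"
proof -
  have "idx ! j < m" if "j < k" for j
    using assms(2,3) that nth_mem by blast
  moreover have "definable S (m + k) (\<lambda>ws. P (drop m ws))"
    using definable_drop[OF assms(1), of m] by (simp add: add.commute)
  ultimately have "definable S (m + k) (\<lambda>ws. P (drop m ws) \<and> (\<forall>j<k. ws ! (m + j) = ws ! (idx ! j)))"
    by (intro definable_conj definable_all_less definable_nth_eq) (auto intro: trans_less_add1)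
  then have "definable S m (\<lambda>xs. \<exists>zs. length zs = k \<and>
      P (drop m (xs @ zs)) \<and> (\<forall>j<k. (xs @ zs) ! (m + j) = (xs @ zs) ! (idx ! j)))"
    by (rule definable_ex_block)
  then show ?thesis
  proof (rule definable_cong)
    fix xs :: "real list" assume "length xs = m"
    then have "(\<exists>zs. length zs = k \<and>
        P (drop m (xs @ zs)) \<and> (\<forall>j<k. (xs @ zs) ! (m + j) = (xs @ zs) ! (idx ! j)))
      \<longleftrightarrow> (\<exists>zs. length zs = k \<and> P zs \<and> (\<forall>j<k. zs ! j = xs ! (idx ! j)))" (is "?lhs \<longleftrightarrow> _")
      using assms(2,3) by (auto simp: nth_append subset_iff)
    also have "\<dots> \<longleftrightarrow> P (map ((!) xs) idx)"
    proof
      assume "\<exists>zs. length zs = k \<and> P zs \<and> (\<forall>j<k. zs ! j = xs ! (idx ! j))"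
      then obtain zs where "length zs = k" "P zs" "\<forall>j<k. zs ! j = xs ! (idx ! j)" by blast
      moreover have "zs = map ((!) xs) idx" using calculation assms(2) by (intro nth_equalityI) auto
      ultimately show "P (map ((!) xs) idx)" by simp
    qed (use assms(2) in \<open>intro exI[of _ "map ((!) xs) idx"], auto\<close>)
    finally show "?lhs \<longleftrightarrow> P (map ((!) xs) idx)" .
  qed
qed

(* Append one coordinate per function, tie it to the function's value through its graph,
   and project the new coordinates away. *)
lemma definable_compose:
  assumes "definable S (length fs) P" and "\<forall>f\<in>set fs. definable_function S n f"
  shows "definable S n (\<lambda>xs. P (map (\<lambda>f. f xs) fs))"
proof -
  let ?k = "length fs"
  have graph: "definable S (n + ?k) (\<lambda>ws. ws ! (n + j) = (fs ! j) (take n ws))" if "j < ?k" for j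
  proof -
    have "definable S (n + ?k) (\<lambda>ws. last (map ((!) ws) ([0..<n] @ [n + j])) =
        (fs ! j) (butlast (map ((!) ws) ([0..<n] @ [n + j]))))"
      using assms(2) that by (intro definable_reindex) (auto simp: definable_function_def)
    then show ?thesis by (rule definable_cong) (simp add: map_nth_upt)
  qed
  have "definable S (n + ?k) (\<lambda>ws. P (drop n ws))"
    using definable_drop[OF assms(1), of n] by (simp add: add.commute)
  then have "definable S (n + ?k) (\<lambda>ws. P (drop n ws) \<and> (\<forall>j<?k. ws ! (n + j) = (fs ! j) (take n ws)))"
    using graph by (intro definable_conj definable_all_less)
  then have "definable S n (\<lambda>xs. \<exists>zs. length zs = ?k \<and>
      P (drop n (xs @ zs)) \<and> (\<forall>j<?k. (xs @ zs) ! (n + j) = (fs ! j) (take n (xs @ zs))))"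
    by (rule definable_ex_block)
  then show ?thesis
  proof (rule definable_cong)
    fix xs :: "real list" assume "length xs = n"
    then have "(\<exists>zs. length zs = ?k \<and>
        P (drop n (xs @ zs)) \<and> (\<forall>j<?k. (xs @ zs) ! (n + j) = (fs ! j) (take n (xs @ zs))))
      \<longleftrightarrow> (\<exists>zs. length zs = ?k \<and> P zs \<and> (\<forall>j<?k. zs ! j = (fs ! j) xs))" (is "?lhs \<longleftrightarrow> _")
      by (simp add: nth_append)
    also have "\<dots> \<longleftrightarrow> P (map (\<lambda>f. f xs) fs)"
    proof
      assume "\<exists>zs. length zs = ?k \<and> P zs \<and> (\<forall>j<?k. zs ! j = (fs ! j) xs)"
      then obtain zs where "length zs = ?k" "P zs" "\<forall>j<?k. zs ! j = (fs ! j) xs" by blast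
      moreover have "zs = map (\<lambda>f. f xs) fs" using calculation by (intro nth_equalityI) auto
      ultimately show "P (map (\<lambda>f. f xs) fs)" by simp
    qed (intro exI[of _ "map (\<lambda>f. f xs) fs"], auto)
    finally show "?lhs \<longleftrightarrow> P (map (\<lambda>f. f xs) fs)" .
  qed
qed

lemma definable_function_nth:
  assumes "i < n"
  shows "definable_function S n (\<lambda>xs. xs ! i)"
  unfolding definable_function_def
  by (rule definable_cong[OF definable_nth_eq[of n "Suc n" i]]) (use assms in \<open>auto simp: last_conv_nth_length nth_butlast\<close>)

lemma definable_function_const: "definable_function S n (\<lambda>_. r)"
proof -
  have "definable S (Suc n) (\<lambda>xs. map ((!) xs) [n] \<in> {[r]})"
    using singleton_set by (intro definable_reindex definable_set) auto
  then show ?thesis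
    unfolding definable_function_def by (rule definable_cong) (auto simp: last_conv_nth_length)
qed

lemma definable_function_butlast:
  assumes "definable_function S n f"
  shows "definable_function S (Suc n) (\<lambda>xs. f (butlast xs))"
proof -
  have "definable S (Suc (Suc n)) (\<lambda>ws. last (map ((!) ws) ([0..<n] @ [Suc n])) =
      f (butlast (map ((!) ws) ([0..<n] @ [Suc n]))))"
    using assms unfolding definable_function_def by (intro definable_reindex) auto
  then show ?thesis
    unfolding definable_function_def
    by (rule definable_cong) (auto simp: map_nth_upt last_conv_nth_length butlast_conv_take)
qed

lemma definable_function_last: "definable_function S (Suc n) last"
  unfolding definable_function_def
  by (rule definable_cong[OF definable_nth_eq[of "Suc n" "Suc (Suc n)" n]])
    (auto simp: last_conv_nth_length nth_butlast)

lemma definable_function_binop: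
  assumes "{[x, y, g x y] | x y. True} \<in> S 3"
    and "definable_function S n f" and "definable_function S n h"
  shows "definable_function S n (\<lambda>xs. g (f xs) (h xs))"
proof -
  have "definable S (Suc n) (\<lambda>xs. map (\<lambda>F. F xs) [\<lambda>xs. f (butlast xs), \<lambda>xs. h (butlast xs), last]
      \<in> {[x, y, g x y] | x y. True})"
    using assms by (intro definable_compose definable_set)
      (auto simp: definable_function_butlast definable_function_last numeral_3_eq_3)
  then show ?thesis
    unfolding definable_function_def by (rule definable_cong) auto
qed

end

section \<open>First-order formulas\<close>

datatype trm = Var nat | Const real | Add trm trm | Mul trm trm

primrec eval_trm :: "trm \<Rightarrow> real list \<Rightarrow> real" where
  "eval_trm (Var i) xs = xs ! i"
| "eval_trm (Const r) xs = r"
| "eval_trm (Add s t) xs = eval_trm s xs + eval_trm t xs"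
| "eval_trm (Mul s t) xs = eval_trm s xs * eval_trm t xs"

primrec trm_vars :: "trm \<Rightarrow> nat set" where
  "trm_vars (Var i) = {i}"
| "trm_vars (Const r) = {}"
| "trm_vars (Add s t) = trm_vars s \<union> trm_vars t"
| "trm_vars (Mul s t) = trm_vars s \<union> trm_vars t"

lemma (in real_structure) definable_function_eval_trm:
  assumes "trm_vars t \<subseteq> {..<n}"
  shows "definable_function S n (eval_trm t)"
  using assms
proof (induction t)
  case (Var i)
  have "eval_trm (Var i) = (\<lambda>xs. xs ! i)" by (rule ext) simp
  with Var show ?case by (simp add: definable_function_nth)
next
  case (Const r)
  have "eval_trm (Const r) = (\<lambda>_. r)" by (rule ext) simp
  then show ?case by (simp add: definable_function_const)
next
  case (Add s t)
  then show ?case by (simp add: definable_function_binop[OF add_graph_set])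
next
  case (Mul s t)
  then show ?case by (simp add: definable_function_binop[OF mult_graph_set])
qed

(* Exists binds a new variable that is appended to the end of the assignment, so in a
   formula with n free variables the bound one has index n. *)
datatype frm = Rel "real list set" "trm list" | Neg frm | Conj frm frm | Exists frm

primrec holds :: "frm \<Rightarrow> real list \<Rightarrow> bool" where
  "holds (Rel A ts) xs \<longleftrightarrow> map (\<lambda>t. eval_trm t xs) ts \<in> A"
| "holds (Neg f) xs \<longleftrightarrow> \<not> holds f xs"
| "holds (Conj f g) xs \<longleftrightarrow> holds f xs \<and> holds g xs"
| "holds (Exists f) xs \<longleftrightarrow> (\<exists>r. holds f (xs @ [r]))"

primrec wf_frm :: "(nat \<Rightarrow> real list set set) \<Rightarrow> nat \<Rightarrow> frm \<Rightarrow> bool" where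
  "wf_frm S n (Rel A ts) \<longleftrightarrow> A \<in> S (length ts) \<and> (\<forall>t\<in>set ts. trm_vars t \<subseteq> {..<n})"
| "wf_frm S n (Neg f) \<longleftrightarrow> wf_frm S n f"
| "wf_frm S n (Conj f g) \<longleftrightarrow> wf_frm S n f \<and> wf_frm S n g"
| "wf_frm S n (Exists f) \<longleftrightarrow> wf_frm S (Suc n) f"

abbreviation Disj :: "frm \<Rightarrow> frm \<Rightarrow> frm" where "Disj f g \<equiv> Neg (Conj (Neg f) (Neg g))"
abbreviation Imp :: "frm \<Rightarrow> frm \<Rightarrow> frm" where "Imp f g \<equiv> Neg (Conj f (Neg g))"
abbreviation Forall :: "frm \<Rightarrow> frm" where "Forall f \<equiv> Neg (Exists (Neg f))"
definition Less :: "trm \<Rightarrow> trm \<Rightarrow> frm" where "Less s t = Rel {[x, y] | x y. x < y} [s, t]"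
definition Equal :: "trm \<Rightarrow> trm \<Rightarrow> frm" where "Equal s t = Rel {[x, x] | x. True} [s, t]"
abbreviation Leq :: "trm \<Rightarrow> trm \<Rightarrow> frm" where "Leq s t \<equiv> Neg (Less t s)"

lemma holds_Less [simp]: "holds (Less s t) xs \<longleftrightarrow> eval_trm s xs < eval_trm t xs"
  by (simp add: Less_def)

lemma holds_Equal [simp]: "holds (Equal s t) xs \<longleftrightarrow> eval_trm s xs = eval_trm t xs"
  by (auto simp: Equal_def)

lemma holds_Exists_pow: "holds ((Exists ^^ k) f) xs \<longleftrightarrow> (\<exists>zs. length zs = k \<and> holds f (xs @ zs))"
proof (induction k arbitrary: xs)
  case (Suc k)
  have "holds ((Exists ^^ Suc k) f) xs \<longleftrightarrow> (\<exists>r zs. length zs = k \<and> holds f ((xs @ [r]) @ zs))"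
    by (simp add: Suc)
  also have "\<dots> \<longleftrightarrow> (\<exists>zs. length zs = Suc k \<and> holds f (xs @ zs))"
    by (metis append_Cons append_assoc append_self_conv2 length_Suc_conv)
  finally show ?case .
qed simp

lemma wf_frm_Exists_pow: "wf_frm S n ((Exists ^^ k) f) \<longleftrightarrow> wf_frm S (n + k) f"
  by (induction k arbitrary: n) simp_all

context real_structure
begin

lemma wf_frm_Less [simp]: "wf_frm S n (Less s t) \<longleftrightarrow> trm_vars s \<subseteq> {..<n} \<and> trm_vars t \<subseteq> {..<n}"
  using less_set by (simp add: Less_def numeral_2_eq_2)

lemma wf_frm_Equal [simp]: "wf_frm S n (Equal s t) \<longleftrightarrow> trm_vars s \<subseteq> {..<n} \<and> trm_vars t \<subseteq> {..<n}"
proof -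
  have "{xs. length xs = 2 \<and> xs ! 0 = xs ! 1} \<in> S 2"
    by (rule diagonal_set) simp_all
  moreover have "{xs. length xs = 2 \<and> xs ! 0 = xs ! 1} = {[x, x] | x. True}"
    by (auto simp: numeral_2_eq_2 length_Suc_conv)
  ultimately have "{[x, x] | x. True} \<in> S 2"
    by (rule back_subst)
  then show ?thesis by (simp add: Equal_def numeral_2_eq_2)
qed

theorem definable_holds:
  assumes "wf_frm S n f"
  shows "definable S n (holds f)"
  using assms
proof (induction f arbitrary: n)
  case (Rel A ts)
  then have "definable S n (\<lambda>xs. map (\<lambda>g. g xs) (map eval_trm ts) \<in> A)"
    by (intro definable_compose definable_set) (auto intro: definable_function_eval_trm)
  then show ?case by (simp add: comp_def)
next
  case (Neg f)
  then show ?case using definable_Not by simp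
next
  case (Conj f g)
  then show ?case using definable_conj by simp
next
  case (Exists f)
  then show ?case using definable_ex_last[of n "holds f"] by simp
qed

lemma pair_set_in_S_if_holds:
  assumes "wf_frm S 2 f" and "\<And>u w. holds f [u, w] \<longleftrightarrow> P u w"
  shows "{[u, w] | u w. P u w} \<in> S 2"
proof (rule pair_set_in_S_if_definable)
  show "definable S 2 (\<lambda>xs. P (xs ! 0) (xs ! 1))"
    using definable_holds[OF assms(1)]
    by (rule definable_cong) (auto simp: assms(2)[symmetric] numeral_2_eq_2 length_Suc_conv)
qed

lemma graph_in_S_if_holds:
  assumes "wf_frm S 2 f" and "\<And>u w. holds f [u, w] \<longleftrightarrow> w = g u"
  shows "{[u, g u] | u. True} \<in> S 2"
  using pair_set_in_S_if_holds[OF assms] by (simp add: eq_commute[of _ "g _"])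

end

section \<open>Definable functions of one variable\<close>

definition inf_or_zero :: "real set \<Rightarrow> real" where
  "inf_or_zero A = (if A \<noteq> {} \<and> bdd_below A then Inf A else 0)"

lemma greatest_lower_bound_iff_inf_or_zero:
  fixes A :: "real set"
  shows "((\<forall>w\<in>A. s \<le> w) \<and> (\<forall>b. (\<forall>w\<in>A. b \<le> w) \<longrightarrow> b \<le> s)) \<or>
      (\<not> (A \<noteq> {} \<and> (\<exists>b. \<forall>w\<in>A. b \<le> w)) \<and> s = 0)
    \<longleftrightarrow> s = inf_or_zero A"
proof (cases "A \<noteq> {} \<and> bdd_below A")
  case True
  have "(\<forall>w\<in>A. s \<le> w) \<and> (\<forall>b. (\<forall>w\<in>A. b \<le> w) \<longrightarrow> b \<le> s) \<longleftrightarrow> s = Inf A"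
  proof
    assume "(\<forall>w\<in>A. s \<le> w) \<and> (\<forall>b. (\<forall>w\<in>A. b \<le> w) \<longrightarrow> b \<le> s)"
    with True show "s = Inf A" by (intro cInf_eq_non_empty[symmetric]) auto
  next
    assume "s = Inf A"
    with True show "(\<forall>w\<in>A. s \<le> w) \<and> (\<forall>b. (\<forall>w\<in>A. b \<le> w) \<longrightarrow> b \<le> s)"
      by (simp add: cInf_lower cInf_greatest)
  qed
  with True show ?thesis by (simp add: inf_or_zero_def bdd_below_def)
next
  case False
  then have "\<not> ((\<forall>w\<in>A. s \<le> w) \<and> (\<forall>b. (\<forall>w\<in>A. b \<le> w) \<longrightarrow> b \<le> s))"
    by (metis bdd_below.I empty_iff gt_ex linorder_not_le)
  with False show ?thesis unfolding inf_or_zero_def bdd_below_def by auto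
qed

context real_structure
begin

lemma inverse_graph_in_S: "{[x, inverse x] | x. True} \<in> S 2"
proof (rule graph_in_S_if_holds)
  let ?f = "Disj (Equal (Mul (Var 0) (Var 1)) (Const 1)) (Conj (Equal (Var 0) (Const 0)) (Equal (Var 1) (Const 0)))"
  show "wf_frm S 2 ?f" by simp
  show "holds ?f [x, s] \<longleftrightarrow> s = inverse x" for x s
    by (cases "x = 0") (auto simp: field_simps)
qed

lemma comp_graph_in_S:
  assumes "{[x, f x] | x. True} \<in> S 2" and "{[x, g x] | x. True} \<in> S 2"
  shows "{[x, f (g x)] | x. True} \<in> S 2"
proof (rule graph_in_S_if_holds)
  let ?F = "Exists (Conj (Rel {[x, g x] | x. True} [Var 0, Var 2]) (Rel {[x, f x] | x. True} [Var 2, Var 1]))"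
  show "wf_frm S 2 ?F" using assms by (simp add: numeral_2_eq_2)
  show "holds ?F [x, s] \<longleftrightarrow> s = f (g x)" for x s by auto
qed

lemma inf_or_zero_graph_in_S:
  assumes "{[u, w] | u w. w \<in> W u} \<in> S 2"
  shows "{[u, inf_or_zero (W u)] | u. True} \<in> S 2"
proof (rule graph_in_S_if_holds)
  \<comment> \<open>With u = Var 0 and s = Var 1: s is the greatest lower bound of W u, or W u is
    empty or unbounded below and s = 0.\<close>
  let ?D = "{[u, w] | u w. w \<in> W u}"
  let ?lower_bound = "\<lambda>i j. Forall (Imp (Rel ?D [Var 0, Var j]) (Leq (Var i) (Var j)))"
  let ?F = "Disj (Conj (?lower_bound 1 2) (Forall (Imp (?lower_bound 2 3) (Leq (Var 2) (Var 1)))))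
    (Conj (Neg (Conj (Exists (Rel ?D [Var 0, Var 2])) (Exists (?lower_bound 2 3)))) (Equal (Var 1) (Const 0)))"
  show "wf_frm S 2 ?F" using assms by (simp add: numeral_2_eq_2)
  show "holds ?F [u, s] \<longleftrightarrow> s = inf_or_zero (W u)" for u s
    unfolding greatest_lower_bound_iff_inf_or_zero[symmetric] by (auto simp: not_less)
qed

end

lemma real_structure_if_polynomially_bounded: "polynomially_bounded S \<Longrightarrow> real_structure S"
  unfolding polynomially_bounded_def o_minimal_def by (blast intro: real_structure_if_structure_on_R)

lemma power_lower_bound_at_0:
  assumes "polynomially_bounded S" and "{[t, \<phi> t] | t. True} \<in> S 2"
  obtains N :: nat and T :: real where "0 < T" and "\<And>t. 0 < t \<Longrightarrow> t < T \<Longrightarrow> 0 < \<phi> t \<Longrightarrow> t ^ N \<le> \<phi> t"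
proof -
  interpret real_structure S
    using assms(1) by (rule real_structure_if_polynomially_bounded)
  have "{[t, inverse (\<phi> t)] | t. True} \<in> S 2"
    using comp_graph_in_S[OF inverse_graph_in_S assms(2)] .
  then have graph: "{[u, inverse (\<phi> (inverse u))] | u. True} \<in> S 2"
    by (rule comp_graph_in_S[where f = "\<lambda>t. inverse (\<phi> t)", OF _ inverse_graph_in_S])
  obtain N :: nat and u0 where bound: "\<And>u. u > u0 \<Longrightarrow> \<bar>inverse (\<phi> (inverse u))\<bar> \<le> u ^ N"
    using assms(1)[unfolded polynomially_bounded_def, THEN conjunct2, rule_format, OF graph] by blast
  define T where "T = inverse (max u0 0 + 1)"
  show thesis
  proof
    show "0 < T" unfolding T_def by simp
    fix t assume t: "0 < t" "t < T" "0 < \<phi> t"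
    have "max u0 0 + 1 < inverse t"
      using less_imp_inverse_less[OF t(2,1)] unfolding T_def by simp
    then have "u0 < inverse t"
      using max.cobounded1[of u0 0] by linarith
    then have "inverse (\<phi> t) \<le> inverse t ^ N"
      using bound[of "inverse t"] t(3) by simp
    then have "inverse (\<phi> t) \<le> inverse (t ^ N)"
      by (simp only: power_inverse)
    then show "t ^ N \<le> \<phi> t"
      using t(1,3) by simp
  qed
qed

lemma length_coords [simp]: "length (coords (x :: real ^ 'm::{finite,linorder})) = CARD('m)"
  by (simp add: coords_def)

lemma coords_inject [simp]: "coords x = coords x' \<longleftrightarrow> x = x'"
  for x x' :: "real ^ 'm::{finite,linorder}"
  by (auto simp: coords_def vec_eq_iff)

lemma coords_surj:
  "length zs = CARD('m::{finite,linorder}) \<Longrightarrow> \<exists>x :: real ^ 'm::{finite,linorder}. coords x = zs"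
proof -
  assume len: "length zs = CARD('m)"
  let ?l = "sorted_list_of_set (UNIV :: 'm set)"
  have "(THE i. i < CARD('m) \<and> ?l ! i = ?l ! k) = k" if "k < CARD('m)" for k
    using that by (intro the_equality) (auto simp: nth_eq_iff_index_eq)
  then have "coords (\<chi> j. zs ! (THE i. i < CARD('m) \<and> ?l ! i = j)) = zs"
    using len by (intro nth_equalityI) (simp_all add: coords_def)
  then show ?thesis by blast
qed

lemma ex_coords_iff: "(\<exists>zs. length zs = CARD('m::{finite,linorder}) \<and> P zs) \<longleftrightarrow> (\<exists>x :: real ^ 'm::{finite,linorder}. P (coords x))"
  by (metis coords_surj length_coords)

lemma sum_list_sq_diff_coords:
  fixes x x' :: "real ^ 'm::{finite,linorder}"
  shows "sum_list (map2 (\<lambda>a b. (a - b)\<^sup>2) (coords x) (coords x')) = (dist x x')\<^sup>2"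
proof -
  have "sum_list (map2 (\<lambda>a b. (a - b)\<^sup>2) (coords x) (coords x')) = (\<Sum>j\<in>UNIV. (x $ j - x' $ j)\<^sup>2)"
    by (simp add: coords_def map2_map_map sum_list_distinct_conv_sum_set)
  also have "\<dots> = (\<Sum>j\<in>UNIV. (dist (x $ j) (x' $ j))\<^sup>2)"
    by (simp add: dist_real_def)
  also have "\<dots> = (L2_set (\<lambda>j. dist (x $ j) (x' $ j)) UNIV)\<^sup>2"
    unfolding L2_set_def by (rule real_sqrt_pow2[symmetric]) (simp add: sum_nonneg)
  also have "\<dots> = (dist x x')\<^sup>2"
    by (simp only: dist_vec_def)
  finally show ?thesis .
qed

section \<open>The deviation function\<close>

definition var_block :: "nat \<Rightarrow> nat \<Rightarrow> trm list" where
  "var_block p k = map Var [p..<p + k]"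

fun sqdist_trm :: "trm list \<Rightarrow> trm list \<Rightarrow> trm" where
  "sqdist_trm (s # ss) (t # ts) =
     Add (Mul (Add s (Mul (Const (-1)) t)) (Add s (Mul (Const (-1)) t))) (sqdist_trm ss ts)"
| "sqdist_trm _ _ = Const 0"

lemma eval_var_block [simp]:
  "p + k \<le> length xs \<Longrightarrow> map (\<lambda>t. eval_trm t xs) (var_block p k) = take k (drop p xs)"
  by (rule nth_equalityI) (auto simp: var_block_def)

lemma eval_sqdist_trm [simp]:
  "eval_trm (sqdist_trm ss ts) xs =
     sum_list (map2 (\<lambda>a b. (a - b)\<^sup>2) (map (\<lambda>t. eval_trm t xs) ss) (map (\<lambda>t. eval_trm t xs) ts))"
  by (induction ss ts rule: sqdist_trm.induct) (simp_all add: power2_eq_square)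

lemma length_var_block [simp]: "length (var_block p k) = k"
  by (simp add: var_block_def)

lemma trm_vars_sqdist_trm: "i \<in> trm_vars (sqdist_trm ss ts) \<Longrightarrow> \<exists>t\<in>set ss \<union> set ts. i \<in> trm_vars t"
  by (induction ss ts rule: sqdist_trm.induct) auto

lemma append_coords_mem_iff [simp]:
  fixes x :: "real ^ 'm::{finite,linorder}" and v :: "real ^ 'n::{finite,linorder}"
  shows "coords x @ coords v \<in> {coords x @ coords v | x v. (x, v) \<in> G} \<longleftrightarrow> (x, v) \<in> G"
  by (auto simp: append_eq_append_conv)

definition deviations :: "('a::metric_space \<times> 'b::metric_space) set \<Rightarrow> 'a \<Rightarrow> 'b \<Rightarrow> real \<Rightarrow> real set" where
  "deviations G a y t = {dist v y | x v. (x, v) \<in> G \<and> dist x a \<le> 1 \<and> dist v y \<le> 1 \<and>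
      (\<forall>x'. (x', y) \<in> G \<longrightarrow> t \<le> dist x x')}"

(* Variables: 0 = t, 1 = w, then the coordinates of x, of v and, under the inner quantifier,
   of x'. Distances only occur squared: w = dist v y becomes 0 \<le> w \<and> w\<^sup>2 = dist\<^sup>2, and
   t \<le> dist x x' becomes t \<le> 0 \<or> t\<^sup>2 \<le> dist\<^sup>2. *)
definition deviation_frm :: "real list set \<Rightarrow> real list \<Rightarrow> real list \<Rightarrow> nat \<Rightarrow> nat \<Rightarrow> frm" where
  "deviation_frm GL ca cy M N =
    (let x = var_block 2 M; v = var_block (2 + M) N; x' = var_block (2 + M + N) M;
         far_from_fibre = Imp (Rel GL (x' @ map Const cy))
           (Disj (Leq (Var 0) (Const 0)) (Leq (Mul (Var 0) (Var 0)) (sqdist_trm x x')))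
     in (Exists ^^ M) ((Exists ^^ N)
       (Conj (Rel GL (x @ v))
       (Conj (Leq (sqdist_trm x (map Const ca)) (Const 1))
       (Conj (Leq (sqdist_trm v (map Const cy)) (Const 1))
       (Conj (Leq (Const 0) (Var 1))
       (Conj (Equal (Mul (Var 1) (Var 1)) (sqdist_trm v (map Const cy)))
         (Neg ((Exists ^^ M) (Neg far_from_fibre))))))))))"

lemma sq_le_one_iff: "0 \<le> d \<Longrightarrow> d\<^sup>2 \<le> 1 \<longleftrightarrow> d \<le> (1::real)"
  by (simp add: power_le_one_iff)

lemma nonneg_sq_eq_iff: "0 \<le> d \<Longrightarrow> 0 \<le> w \<and> w * w = d\<^sup>2 \<longleftrightarrow> w = (d::real)"
  by (metis power2_eq_square power2_eq_iff_nonneg)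

lemma le_or_sq_le_iff: "0 \<le> d \<Longrightarrow> t \<le> 0 \<or> t * t \<le> d\<^sup>2 \<longleftrightarrow> t \<le> (d::real)"
  by (cases "t \<le> 0") (auto simp flip: power2_eq_square simp: power2_le_iff_abs_le)

lemma holds_deviation_frm:
  fixes G :: "((real ^ 'm::{finite,linorder}) \<times> (real ^ 'n::{finite,linorder})) set"
  shows "holds (deviation_frm {coords x @ coords v | x v. (x, v) \<in> G} (coords a) (coords y) CARD('m) CARD('n)) [t, w]
    \<longleftrightarrow> w \<in> deviations G a y t"
proof -
  have "holds (deviation_frm {coords x @ coords v | x v. (x, v) \<in> G} (coords a) (coords y) CARD('m) CARD('n)) [t, w]
    \<longleftrightarrow> (\<exists>x v. (x, v) \<in> G \<and> (dist x a)\<^sup>2 \<le> 1 \<and> (dist v y)\<^sup>2 \<le> 1 \<and> (0 \<le> w \<and> w * w = (dist v y)\<^sup>2) \<and>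
          (\<forall>x'. (x', y) \<in> G \<longrightarrow> t \<le> 0 \<or> t * t \<le> (dist x x')\<^sup>2))"
    unfolding deviation_frm_def Let_def
    by (simp add: holds_Exists_pow ex_coords_iff sum_list_sq_diff_coords not_less comp_def)
  also have "\<dots> \<longleftrightarrow> w \<in> deviations G a y t"
    by (simp add: deviations_def sq_le_one_iff nonneg_sq_eq_iff le_or_sq_le_iff) blast
  finally show ?thesis .
qed

lemma (in real_structure) deviations_in_S:
  fixes G :: "((real ^ 'm::{finite,linorder}) \<times> (real ^ 'n::{finite,linorder})) set"
  assumes "definable_graph S G"
  shows "{[t, w] | t w. w \<in> deviations G a y t} \<in> S 2"
proof (rule pair_set_in_S_if_holds)
  show "wf_frm S 2 (deviation_frm {coords x @ coords v | x v. (x, v) \<in> G} (coords a) (coords y) CARD('m) CARD('n))"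
    using assms unfolding definable_graph_def deviation_frm_def Let_def
    by (simp add: wf_frm_Exists_pow, auto simp: var_block_def dest!: trm_vars_sqdist_trm)
qed (rule holds_deviation_frm)

lemma deviations_antimono: "t \<le> t' \<Longrightarrow> deviations G a y t' \<subseteq> deviations G a y t"
  unfolding deviations_def by (blast intro: order_trans)

lemma dist_in_deviations_infdist:
  assumes "(x, v) \<in> G" and "dist x a \<le> 1" and "dist v y \<le> 1"
  shows "dist v y \<in> deviations G a y (infdist x {x'. (x', y) \<in> G})"
  using assms unfolding deviations_def by (blast intro: infdist_le)

lemma deviations_pos: "0 < t \<Longrightarrow> w \<in> deviations G a y t \<Longrightarrow> 0 < w"
  unfolding deviations_def by force

lemma bdd_below_deviations: "bdd_below (deviations G a y t)"
  unfolding deviations_def by (rule bdd_belowI[of _ 0]) auto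

lemma compact_deviations:
  fixes G :: "('a::heine_borel \<times> 'b::heine_borel) set"
  assumes "closed G"
  shows "compact (deviations G a y t)"
proof -
  define K where "K = G \<inter> (cball a 1 \<times> cball y 1) \<inter> (\<Inter>x'\<in>{x'. (x', y) \<in> G}. {p. t \<le> dist (fst p) x'})"
  have "closed K"
    unfolding K_def by (intro closed_Int assms closed_Times closed_cball closed_INT ballI
        closed_Collect_le continuous_intros)
  moreover have "bounded K"
    unfolding K_def by (rule bounded_subset[OF bounded_Times[OF bounded_cball bounded_cball]]) auto
  ultimately have "compact ((\<lambda>p. dist (snd p) y) ` K)"
    by (intro compact_continuous_image continuous_intros) (simp add: compact_eq_bounded_closed)
  moreover have "deviations G a y t = (\<lambda>p. dist (snd p) y) ` K"
  proof (intro equalityI subsetI)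
    fix w assume "w \<in> deviations G a y t"
    then obtain x v where "(x, v) \<in> K" and "w = dist v y"
      unfolding deviations_def K_def by (auto simp: dist_commute)
    then show "w \<in> (\<lambda>p. dist (snd p) y) ` K" by force
  next
    fix w assume "w \<in> (\<lambda>p. dist (snd p) y) ` K"
    then show "w \<in> deviations G a y t"
      unfolding deviations_def K_def by (force simp: dist_commute)
  qed
  ultimately show ?thesis by simp
qed

lemma Inf_deviations_pos:
  fixes G :: "('a::heine_borel \<times> 'b::heine_borel) set"
  assumes "closed G" and "0 < t" and "deviations G a y t \<noteq> {}"
  shows "0 < Inf (deviations G a y t)"
proof -
  have "Inf (deviations G a y t) \<in> deviations G a y t"
    using assms(3) bdd_below_deviations compact_imp_closed[OF compact_deviations[OF assms(1)]]
    by (rule closed_contains_Inf)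
  then show ?thesis using deviations_pos[OF assms(2)] by blast
qed

lemma inf_or_zero_deviations:
  "deviations G a y t \<noteq> {} \<Longrightarrow> inf_or_zero (deviations G a y t) = Inf (deviations G a y t)"
  by (simp add: inf_or_zero_def bdd_below_deviations)

lemma infdist_power_le_deviation:
  assumes "(a, y) \<in> G" and "(x, v) \<in> G" and "dist x a < 1" and "dist v y < 1"
    and bound: "\<And>t. 0 < t \<Longrightarrow> t < T \<Longrightarrow> deviations G a y t \<noteq> {} \<Longrightarrow> t ^ N \<le> Inf (deviations G a y t)"
    and C: "0 < C" "C \<le> 1" "deviations G a y T \<noteq> {} \<Longrightarrow> C \<le> Inf (deviations G a y T)"
  shows "C * infdist x {x'. (x', y) \<in> G} powr Suc N \<le> dist v y"
proof -
  define \<delta> where "\<delta> = infdist x {x'. (x', y) \<in> G}"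
  have dev: "dist v y \<in> deviations G a y \<delta>"
    unfolding \<delta>_def using assms(2-4) by (intro dist_in_deviations_infdist) auto
  have "\<delta> \<le> dist x a"
    unfolding \<delta>_def using assms(1) by (intro infdist_le) auto
  with assms(3) have \<delta>_bounds: "0 \<le> \<delta>" "\<delta> < 1"
    unfolding \<delta>_def by (auto simp: infdist_nonneg)
  have "C * \<delta> powr Suc N \<le> dist v y"
  proof (cases "\<delta> = 0")
    case False
    with \<delta>_bounds have "0 < \<delta>" by simp
    then have powr_eq: "\<delta> powr Suc N = \<delta> ^ Suc N"
      by (rule powr_realpow)
    have pow_le: "\<delta> ^ Suc N \<le> \<delta> ^ N" "\<delta> ^ Suc N \<le> 1"
      using \<delta>_bounds power_decreasing[of N "Suc N" \<delta>] power_le_one[of \<delta> "Suc N"] by auto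
    show ?thesis
    proof (cases "\<delta> < T")
      case True
      have "C * \<delta> powr Suc N \<le> \<delta> ^ Suc N"
        unfolding powr_eq using C \<delta>_bounds by (intro mult_left_le_one_le) auto
      also have "\<dots> \<le> \<delta> ^ N" by (rule pow_le(1))
      also have "\<dots> \<le> Inf (deviations G a y \<delta>)"
        using True \<open>0 < \<delta>\<close> dev by (intro bound) auto
      also have "\<dots> \<le> dist v y"
        using dev bdd_below_deviations by (rule cInf_lower)
      finally show ?thesis .
    next
      case False
      then have "dist v y \<in> deviations G a y T"
        using dev deviations_antimono by (meson not_less subsetD)
      have "C * \<delta> powr Suc N \<le> C"
        unfolding powr_eq using C pow_le(2) by (intro mult_left_le) auto
      also have "\<dots> \<le> Inf (deviations G a y T)"
        using C(3) \<open>dist v y \<in> deviations G a y T\<close> by blast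
      also have "\<dots> \<le> dist v y"
        using \<open>dist v y \<in> deviations G a y T\<close> bdd_below_deviations by (rule cInf_lower)
      finally show ?thesis .
    qed
  qed simp
  then show ?thesis by (simp only: \<delta>_def)
qed

lemma deviation_power_estimate:
  fixes G :: "('a::heine_borel \<times> 'b::{heine_borel,real_normed_vector}) set"
  assumes "closed G" and "(a, y) \<in> G" and "0 < T"
    and bound: "\<And>t. 0 < t \<Longrightarrow> t < T \<Longrightarrow> deviations G a y t \<noteq> {} \<Longrightarrow> t ^ N \<le> Inf (deviations G a y t)"
  shows "\<exists>U C l. open U \<and> (a, y) \<in> U \<and> C > 0 \<and> l > 0 \<and>
           (\<forall>x v. (x, v) \<in> G \<inter> U \<longrightarrow> norm (v - y) \<ge> C * (infdist x {x'. (x', y) \<in> G}) powr l)"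
proof -
  define C where "C = (if deviations G a y T = {} then 1 else min 1 (Inf (deviations G a y T)))"
  have C: "0 < C" "C \<le> 1" "deviations G a y T \<noteq> {} \<Longrightarrow> C \<le> Inf (deviations G a y T)"
    using Inf_deviations_pos[OF assms(1,3)] unfolding C_def by auto
  show ?thesis
  proof (rule exI[of _ "ball a 1 \<times> ball y 1"], rule exI[of _ C], rule exI[of _ "real (Suc N)"],
      intro conjI allI impI)
    fix x v assume "(x, v) \<in> G \<inter> ball a 1 \<times> ball y 1"
    then show "C * infdist x {x'. (x', y) \<in> G} powr real (Suc N) \<le> norm (v - y)"
      using infdist_power_le_deviation[OF assms(2) _ _ _ bound C] by (simp add: dist_commute dist_norm)
  qed (simp_all add: C open_Times)
qed

theorem mainTheorem5:
  fixes S :: "nat \<Rightarrow> real list set set"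
    and G :: "((real ^ ('m::{finite,linorder})) \<times> (real ^ ('n::{finite,linorder}))) set"
    and a :: "real ^ ('m::{finite,linorder})" and y :: "real ^ ('n::{finite,linorder})"
  assumes "polynomially_bounded S"
    and "definable_graph S G"
    and "closed G"
    and "(a, y) \<in> G"
  shows "\<exists>U C l. open U \<and> (a, y) \<in> U \<and> C > 0 \<and> l > 0 \<and>
           (\<forall>x v. (x, v) \<in> G \<inter> U \<longrightarrow>
              norm (v - y) \<ge> C * (infdist x {x'. (x', y) \<in> G}) powr l)"
proof -
  interpret real_structure S
    using assms(1) by (rule real_structure_if_polynomially_bounded)
  have "{[t, inf_or_zero (deviations G a y t)] | t. True} \<in> S 2"
    using deviations_in_S[OF assms(2)] by (rule inf_or_zero_graph_in_S)
  then obtain N T where "0 < T"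
    and bound: "\<And>t. 0 < t \<Longrightarrow> t < T \<Longrightarrow> 0 < inf_or_zero (deviations G a y t) \<Longrightarrow>
      t ^ N \<le> inf_or_zero (deviations G a y t)"
    by (rule power_lower_bound_at_0[OF assms(1)]) blast
  have "t ^ N \<le> Inf (deviations G a y t)"
    if "0 < t" "t < T" "deviations G a y t \<noteq> {}" for t
    using bound[OF that(1,2)] Inf_deviations_pos[OF assms(3) that(1,3)]
    by (simp add: inf_or_zero_deviations[OF that(3)])
  then show ?thesis
    using deviation_power_estimate[OF assms(3,4) \<open>0 < T\<close>] by blast
qed

end
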